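(* Let $A_3$ be the complex $3$-Lie algebra with basis $\{e_1,e_2,e_3\}$ whose only nonzero bracket of basis elements (up to skew-symmetry) is $[e_1,e_2,e_3]=e_1$, and let $(A_3,\cdot,[\cdot,\cdot,\cdot])$ be a transposed Poisson $3$-Lie algebra. Then there exist $\beta_{21}^2,\beta_{22}^2,\beta_{23}^2,\beta_{31}^2,\beta_{32}^2,\beta_{33}^2,\beta_{31}^3,\beta_{32}^3,\beta_{33}^3\in\mathbb{C}$ such that $e_1\cdot e_1=0$ and $$\begin{aligned} e_1\cdot e_2&=\tfrac{\beta_{22}^2+\beta_{33}^2}{2}e_1, & e_1\cdot e_3&=\tfrac{\beta_{32}^2+\beta_{33}^3}{2}e_1,\\ e_2\cdot e_2&=\beta_{21}^2e_1+\beta_{22}^2e_2+\beta_{23}^2e_3, & e_2\cdot e_3&=\beta_{31}^2e_1+\beta_{32}^2e_2+\beta_{33}^2e_3,\\ e_3\cdot e_3&=\beta_{31}^3e_1+\beta_{32}^3e_2+\beta_{33}^3e_3. \end{aligned}$$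
   Context: A transposed Poisson $3$-Lie algebra is a triple $(A,\cdot,[\cdot,\cdot,\cdot])$ where $(A,\cdot)$ is a commutative algebra (a commutative bilinear product; associativity is not required here), $(A,[\cdot,\cdot,\cdot])$ is a $3$-Lie algebra, and $3u\cdot[x,y,z]=[u\cdot x,y,z]+[x,u\cdot y,z]+[x,y,u\cdot z]$ for all $x,y,z,u\in A$. *)

theory Defs
  imports "HOL-Analysis.Analysis"
begin

text \<open>The underlying complex vector space of A_3 is complex^3, with standard basis e 1, e 2, e 3.
  Scalar multiplication is the componentwise scalar multiplication *s.\<close>

definition bas :: "3 \<Rightarrow> complex^3" where
  "bas i = axis i 1"

definition A3_basis_br :: "3 \<Rightarrow> 3 \<Rightarrow> 3 \<Rightarrow> complex^3" where
  "A3_basis_br i j k =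
     (if (i, j, k) \<in> {(1,2,3), (2,3,1), (3,1,2)} then bas 1
      else if (i, j, k) \<in> {(1,3,2), (2,1,3), (3,2,1)} then - bas 1
      else 0)"

definition A3_br :: "complex^3 \<Rightarrow> complex^3 \<Rightarrow> complex^3 \<Rightarrow> complex^3" where
  "A3_br x y z = (\<Sum>i\<in>UNIV. \<Sum>j\<in>UNIV. \<Sum>k\<in>UNIV. (x$i * y$j * z$k) *s A3_basis_br i j k)"

definition comm_bilinear_prod :: "(complex^'n \<Rightarrow> complex^'n \<Rightarrow> complex^'n) \<Rightarrow> bool" where
  "comm_bilinear_prod m \<longleftrightarrow>
     (\<forall>x y. m x y = m y x) \<and>
     (\<forall>a x y z. m (a *s x + y) z = a *s m x z + m y z)"

definition three_Lie :: "(complex^'n \<Rightarrow> complex^'n \<Rightarrow> complex^'n \<Rightarrow> complex^'n) \<Rightarrow> bool" where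
  "three_Lie br \<longleftrightarrow>
     (\<forall>a x x' y z. br (a *s x + x') y z = a *s br x y z + br x' y z) \<and>
     (\<forall>a x y y' z. br x (a *s y + y') z = a *s br x y z + br x y' z) \<and>
     (\<forall>a x y z z'. br x y (a *s z + z') = a *s br x y z + br x y z') \<and>
     (\<forall>x y z. br y x z = - br x y z) \<and>
     (\<forall>x y z. br x z y = - br x y z) \<and>
     (\<forall>x1 x2 y1 y2 y3.
        br x1 x2 (br y1 y2 y3) =
          br (br x1 x2 y1) y2 y3 + br y1 (br x1 x2 y2) y3 + br y1 y2 (br x1 x2 y3))"

definition transposed_poisson_3Lie ::
  "(complex^'n \<Rightarrow> complex^'n \<Rightarrow> complex^'n) \<Rightarrow>
   (complex^'n \<Rightarrow> complex^'n \<Rightarrow> complex^'n \<Rightarrow> complex^'n) \<Rightarrow> bool" where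
  "transposed_poisson_3Lie m br \<longleftrightarrow>
     comm_bilinear_prod m \<and> three_Lie br \<and>
     (\<forall>u x y z. 3 *s m u (br x y z) = br (m u x) y z + br x (m u y) z + br x y (m u z))"

end

theory Submission
  imports Defs
begin

text \<open>On A_3 the bracket [x,y,z] is det(x,y,z) e_1. Applying the compatibility identity to
  (e_1,e_2,e_3) therefore gives 3 u\<cdot>e_1 = tr(L_u) e_1, where L_u is multiplication by u.
  So every u\<cdot>e_1 is a multiple of e_1 and its e_1-coefficient is tr(L_u)/3; taking
  u = e_1, e_2, e_3 and using commutativity yields the stated multiplication table.\<close>

lemma bas_nth: "bas i $ j = (if j = i then 1 else 0)"
  by (simp add: bas_def axis_def)

lemma vec3_eq_iff: "(v::'a^3) = w \<longleftrightarrow> v$1 = w$1 \<and> v$2 = w$2 \<and> v$3 = w$3"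
  by (simp add: vec_eq_iff forall_3)

lemma vec3_bas_expansion: "v = v$1 *s bas 1 + v$2 *s bas 2 + v$3 *s bas 3"
  by (simp add: vec3_eq_iff bas_nth)

lemma A3_br_eq:
  "A3_br x y z = (x$1*y$2*z$3 + x$2*y$3*z$1 + x$3*y$1*z$2
     - x$1*y$3*z$2 - x$2*y$1*z$3 - x$3*y$2*z$1) *s bas 1"
  unfolding A3_br_def sum_3 A3_basis_br_def
  by (simp add: vec3_eq_iff bas_nth algebra_simps)

lemma A3_br_bas_coords:
  "A3_br v (bas 2) (bas 3) = v$1 *s bas 1"
  "A3_br (bas 1) v (bas 3) = v$2 *s bas 1"
  "A3_br (bas 1) (bas 2) v = v$3 *s bas 1"
  by (simp_all add: A3_br_eq bas_nth)

lemma A3_mult_bas1_trace: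
  assumes "transposed_poisson_3Lie m A3_br"
  shows "3 *s m u (bas 1) = (m u (bas 1) $ 1 + m u (bas 2) $ 2 + m u (bas 3) $ 3) *s bas 1"
proof -
  have "3 *s m u (A3_br (bas 1) (bas 2) (bas 3)) =
      A3_br (m u (bas 1)) (bas 2) (bas 3) + A3_br (bas 1) (m u (bas 2)) (bas 3)
        + A3_br (bas 1) (bas 2) (m u (bas 3))"
    using assms by (simp add: transposed_poisson_3Lie_def)
  moreover have "A3_br (bas 1) (bas 2) (bas 3) = bas 1"
    using A3_br_bas_coords(1)[of "bas 1"] by (simp add: bas_nth)
  ultimately show ?thesis
    by (simp add: A3_br_bas_coords vector_sadd_rdistrib)
qed

lemma A3_mult_bas1:
  assumes "transposed_poisson_3Lie m A3_br"
  shows "m u (bas 1) = (m u (bas 1) $ 1) *s bas 1"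
    and "2 * m u (bas 1) $ 1 = m u (bas 2) $ 2 + m u (bas 3) $ 3"
proof -
  have "3 * m u (bas 1) $ i =
      (if i = 1 then m u (bas 1) $ 1 + m u (bas 2) $ 2 + m u (bas 3) $ 3 else 0)" for i
    using arg_cong[OF A3_mult_bas1_trace[OF assms, of u], of "\<lambda>v. v $ i"]
    by (simp add: bas_nth)
  from this[of 1] this[of 2] this[of 3]
  show "m u (bas 1) = (m u (bas 1) $ 1) *s bas 1"
    and "2 * m u (bas 1) $ 1 = m u (bas 2) $ 2 + m u (bas 3) $ 3"
    by (simp_all add: vec3_eq_iff bas_nth)
qed

theorem lemma3p5:
  fixes m :: "complex^3 \<Rightarrow> complex^3 \<Rightarrow> complex^3"
  assumes "transposed_poisson_3Lie m A3_br"
  shows "\<exists>b2_21 b2_22 b2_23 b2_31 b2_32 b2_33 b3_31 b3_32 b3_33 :: complex.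
    m (bas 1) (bas 1) = 0 \<and>
    m (bas 1) (bas 2) = ((b2_22 + b2_33) / 2) *s bas 1 \<and>
    m (bas 1) (bas 3) = ((b2_32 + b3_33) / 2) *s bas 1 \<and>
    m (bas 2) (bas 2) = b2_21 *s bas 1 + b2_22 *s bas 2 + b2_23 *s bas 3 \<and>
    m (bas 2) (bas 3) = b2_31 *s bas 1 + b2_32 *s bas 2 + b2_33 *s bas 3 \<and>
    m (bas 3) (bas 3) = b3_31 *s bas 1 + b3_32 *s bas 2 + b3_33 *s bas 3"
proof -
  have comm: "m x y = m y x" for x y
    using assms by (simp add: transposed_poisson_3Lie_def comm_bilinear_prod_def)
  note in_span = A3_mult_bas1(1)[OF assms] and coeff = A3_mult_bas1(2)[OF assms]
  have e12: "m (bas 1) (bas 2) = (m (bas 1) (bas 2) $ 1) *s bas 1"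
    and e13: "m (bas 1) (bas 3) = (m (bas 1) (bas 3) $ 1) *s bas 1"
    using in_span[of "bas 2"] in_span[of "bas 3"] comm by metis+
  have "m (bas 1) (bas 1) $ 1 = 0"
    using coeff[of "bas 1"] arg_cong[OF e12, of "\<lambda>v. v $ 2"] arg_cong[OF e13, of "\<lambda>v. v $ 3"]
    by (simp add: bas_nth)
  then have e11: "m (bas 1) (bas 1) = 0"
    using in_span[of "bas 1"] by simp
  have "2 * m (bas 1) (bas 2) $ 1 = m (bas 2) (bas 2) $ 2 + m (bas 2) (bas 3) $ 3"
    and "2 * m (bas 1) (bas 3) $ 1 = m (bas 2) (bas 3) $ 2 + m (bas 3) (bas 3) $ 3"
    using coeff[of "bas 2"] coeff[of "bas 3"] comm by metis+
  then have "m (bas 1) (bas 2) = ((m (bas 2) (bas 2) $ 2 + m (bas 2) (bas 3) $ 3) / 2) *s bas 1"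
    and "m (bas 1) (bas 3) = ((m (bas 2) (bas 3) $ 2 + m (bas 3) (bas 3) $ 3) / 2) *s bas 1"
    using e12 e13 by (metis nonzero_mult_div_cancel_left zero_neq_numeral)+
  then show ?thesis
    using e11 vec3_bas_expansion by blast
qed

end
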